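(* Let $A=\{a_1,\dots,a_{3k}\}$ be an instance of 3-PARTITION with $a^2$ divisible by $7$, and let $G(A)$ be the bipartite network constructed from $A$ as described in the context. In any division of $G(A)$ with maximal bipartite modularity, none of the bicliques $K_1,\dots,K_k$ is divided (i.e., for each $t$, all vertices of $K_t$ lie in a single community).
   Context: An instance of 3-PARTITION is a set of $3k$ positive integers $A=\{a_1,\dots,a_{3k}\}$ such that $a=\sum_{i=1}^{3k}a_i=kb$ and $b/4<a_i<b/2$ for all $i$, for some integer $b$. The bipartite network $G(A)$ (vertices colored red/blue, every edge joining a red and a blue vertex) is built as follows. (1) Construct $k$ complete bipartite networks (bicliques) $K_1,\dots,K_k$, each with $a$ red and $a$ blue vertices. (2) For each $i=1,\dots,3k$ add a red vertex $x_i$ and a blue vertex $y_i$ (element vertices). (3) For each $i$, connect $x_i$ to $a_i$ blue vertices in each of the $k$ bicliques, in such a way that each blue vertex of every biclique is adjacent to exactly one red element vertex; similarly connect $y_i$ to $a_i$ red vertices in each biclique so that each red vertex of every biclique is adjacent to exactly one blue element vertex. (4) For each $i$, add the edge $x_iy_i$. (5) For each $i$, construct a star $X_i$ with one blue internal vertex and $a^2/7$ red leaves, and a star $Y_i$ with one red internal vertex and $a^2/7$ blue leaves. (6) For each $i$, connect $x_i$ to the internal vertex of $X_i$ and $y_i$ to the internal vertex of $Y_i$. A division of the vertex set is a partition into communities. With $m$ the number of edges, Barber's bipartite modularity is $Q_b(\mathcal{C})=\sum_{C\in\mathcal{C}}\left(\frac{m_C}{m}-\frac{R_CB_C}{m^2}\right)$,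 where $m_C$ is the number of edges inside $C$ and $R_C$ (resp. $B_C$) is the sum of degrees of red (resp. blue) vertices in $C$. A division with maximal bipartite modularity is one maximizing $Q_b$ over all divisions. *)

theory Defs
  imports Complex_Main "HOL-Library.Disjoint_Sets"
begin

text \<open>A bipartite network is given by a set Red of red vertices, a set Blue of blue
vertices and a set E of edges, each edge being a pair (r, b) with r red and b blue.\<close>

definition bdeg :: "('v \<times> 'v) set \<Rightarrow> 'v \<Rightarrow> nat" where
  "bdeg E v = card {e \<in> E. fst e = v \<or> snd e = v}"

definition Qb :: "'v set \<Rightarrow> 'v set \<Rightarrow> ('v \<times> 'v) set \<Rightarrow> 'v set set \<Rightarrow> real" where
  "Qb Red Blue E P =
     (\<Sum>C\<in>P. real (card {e \<in> E. fst e \<in> C \<and> snd e \<in> C}) / real (card E)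
            - real (\<Sum>v\<in>C \<inter> Red. bdeg E v) * real (\<Sum>v\<in>C \<inter> Blue. bdeg E v)
              / (real (card E))^2)"

definition max_division :: "'v set \<Rightarrow> 'v set \<Rightarrow> ('v \<times> 'v) set \<Rightarrow> 'v set set \<Rightarrow> bool" where
  "max_division Red Blue E P \<longleftrightarrow>
     partition_on (Red \<union> Blue) P \<and>
     (\<forall>P'. partition_on (Red \<union> Blue) P' \<longrightarrow> Qb Red Blue E P' \<le> Qb Red Blue E P)"

text \<open>Elements a_1..a_{3k} are represented as as 0, ..., as (3k-1).\<close>
definition three_partition_instance :: "nat \<Rightarrow> nat \<Rightarrow> (nat \<Rightarrow> nat) \<Rightarrow> bool" where
  "three_partition_instance k b as \<longleftrightarrow>
     (\<forall>i<3*k. 0 < as i \<and> real b / 4 < real (as i) \<and> real (as i) < real b / 2) \<and>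
     (\<Sum>i<3*k. as i) = k * b"

definition asum :: "nat \<Rightarrow> (nat \<Rightarrow> nat) \<Rightarrow> nat" where
  "asum k as = (\<Sum>i<3*k. as i)"

datatype vtx =
    KR nat nat   \<comment> \<open>KR t j: j-th red vertex of biclique K_t\<close>
  | KB nat nat   \<comment> \<open>KB t j: j-th blue vertex of biclique K_t\<close>
  | X nat        \<comment> \<open>red element vertex x_i\<close>
  | Y nat        \<comment> \<open>blue element vertex y_i\<close>
  | XC nat       \<comment> \<open>blue internal vertex of star X_i\<close>
  | XL nat nat   \<comment> \<open>red leaves of star X_i\<close>
  | YC nat       \<comment> \<open>red internal vertex of star Y_i\<close>
  | YL nat nat   \<comment> \<open>blue leaves of star Y_i\<close>

text \<open>Step (3) leaves a choice: f t j is the index of the element vertex adjacent to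
the j-th (blue resp. red) vertex of biclique K_t.\<close>
definition valid_assign :: "nat \<Rightarrow> (nat \<Rightarrow> nat) \<Rightarrow> (nat \<Rightarrow> nat \<Rightarrow> nat) \<Rightarrow> bool" where
  "valid_assign k as f \<longleftrightarrow>
     (\<forall>t<k. \<forall>j<asum k as. f t j < 3*k) \<and>
     (\<forall>t<k. \<forall>i<3*k. card {j. j < asum k as \<and> f t j = i} = as i)"

definition GA_red :: "nat \<Rightarrow> (nat \<Rightarrow> nat) \<Rightarrow> vtx set" where
  "GA_red k as =
     {KR t j | t j. t < k \<and> j < asum k as} \<union> {X i | i. i < 3*k}
     \<union> {XL i l | i l. i < 3*k \<and> l < (asum k as)^2 div 7} \<union> {YC i | i. i < 3*k}"

definition GA_blue :: "nat \<Rightarrow> (nat \<Rightarrow> nat) \<Rightarrow> vtx set" where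
  "GA_blue k as =
     {KB t j | t j. t < k \<and> j < asum k as} \<union> {Y i | i. i < 3*k}
     \<union> {YL i l | i l. i < 3*k \<and> l < (asum k as)^2 div 7} \<union> {XC i | i. i < 3*k}"

definition GA_edges :: "nat \<Rightarrow> (nat \<Rightarrow> nat) \<Rightarrow> (nat \<Rightarrow> nat \<Rightarrow> nat) \<Rightarrow> (nat \<Rightarrow> nat \<Rightarrow> nat)
     \<Rightarrow> (vtx \<times> vtx) set" where
  "GA_edges k as fr fb =
     {(KR t j, KB t j') | t j j'. t < k \<and> j < asum k as \<and> j' < asum k as}
     \<union> {(X i, KB t j) | i t j. i < 3*k \<and> t < k \<and> j < asum k as \<and> fb t j = i}
     \<union> {(KR t j, Y i) | i t j. i < 3*k \<and> t < k \<and> j < asum k as \<and> fr t j = i}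
     \<union> {(X i, Y i) | i. i < 3*k}
     \<union> {(XL i l, XC i) | i l. i < 3*k \<and> l < (asum k as)^2 div 7}
     \<union> {(YC i, YL i l) | i l. i < 3*k \<and> l < (asum k as)^2 div 7}
     \<union> {(X i, XC i) | i. i < 3*k}
     \<union> {(YC i, Y i) | i. i < 3*k}"

definition biclique :: "nat \<Rightarrow> (nat \<Rightarrow> nat) \<Rightarrow> nat \<Rightarrow> vtx set" where
  "biclique k as t = {KR t j | j. j < asum k as} \<union> {KB t j | j. j < asum k as}"

end

theory Submission
  imports Defs
begin

text \<open>Scaled by \<open>m\<^sup>2\<close>, a community \<open>C\<close> contributes \<open>m e(C) - R\<^sub>C B\<^sub>C\<close> to \<open>Q\<^sub>b\<close>. Let \<open>K\<close> be a biclique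
  with \<open>a\<close> red and \<open>a\<close> blue vertices, each of degree \<open>a + 1\<close>, that is split by a division \<open>P\<close>.
  Remove \<open>K\<close> from every community, and then either add it to one community \<open>T\<close> or keep it
  as a community of its own. Averaging these moves with weight \<open>min |T \<inter> KR| |T \<inter> KB|\<close> on
  the move into \<open>T\<close> and the remaining weight on isolating \<open>K\<close>, the average gain is positive
  as soon as \<open>m (a - 3) > (a + 1)\<^sup>2 a\<close>: the biclique edges cut by \<open>P\<close> outweigh everything
  else. So some move improves \<open>P\<close>, and in \<open>G(A)\<close> the stars of size \<open>a\<^sup>2/7\<close> supply enough edges.\<close>

lemma sum_power2_le_power2_sum:
  fixes f :: "'i \<Rightarrow> real"
  assumes "finite I" and "\<And>i. i \<in> I \<Longrightarrow> f i \<ge> 0"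
  shows "(\<Sum>i\<in>I. f i ^ 2) \<le> (\<Sum>i\<in>I. f i) ^ 2"
proof -
  have "(\<Sum>i\<in>I. f i ^ 2) \<le> (\<Sum>i\<in>I. f i * (\<Sum>j\<in>I. f j))"
    using assms member_le_sum[of _ I f]
    by (intro sum_mono) (simp add: power2_eq_square mult_left_mono)
  also have "\<dots> = (\<Sum>i\<in>I. f i) ^ 2"
    by (simp add: power2_eq_square sum_distrib_right)
  finally show ?thesis .
qed

lemma sum_min_deficit_le:
  fixes r s :: "'i \<Rightarrow> real"
  assumes fin: "finite I" and r0: "\<And>i. i \<in> I \<Longrightarrow> r i \<ge> 0" and s0: "\<And>i. i \<in> I \<Longrightarrow> s i \<ge> 0"
    and sum_r: "(\<Sum>i\<in>I. r i) = a" and sum_s: "(\<Sum>i\<in>I. s i) = a"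
  shows "(\<Sum>i\<in>I. (r i + s i) * (a - min (r i) (s i))) \<le> 3 * (a^2 - (\<Sum>i\<in>I. r i * s i))"
proof -
  \<comment> \<open>With \<open>\<mu> = min r s\<close> and \<open>e = |r - s|\<close>, each \<open>e i\<close> is at most \<open>a - \<Sum>\<mu>\<close>, and the claim
     reduces to \<open>\<Sum>\<mu>\<^sup>2 + 2 \<Sum>\<mu> e \<le> a\<^sup>2\<close>.\<close>
  define \<mu> where "\<mu> i = min (r i) (s i)" for i
  define e where "e i = \<bar>r i - s i\<bar>" for i
  define M where "M = (\<Sum>i\<in>I. \<mu> i)"
  have \<mu>0: "\<mu> i \<ge> 0" if "i \<in> I" for i
    using r0[OF that] s0[OF that] by (simp add: \<mu>_def)
  have e_le: "e i \<le> a - M" if "i \<in> I" for i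
  proof -
    have "r i - \<mu> i \<le> (\<Sum>j\<in>I. r j - \<mu> j)" "s i - \<mu> i \<le> (\<Sum>j\<in>I. s j - \<mu> j)"
      by (rule member_le_sum[OF that _ fin]; simp add: \<mu>_def)+
    then show ?thesis
      using sum_r sum_s by (auto simp: e_def M_def \<mu>_def sum_subtractf abs_if split: if_splits)
  qed
  have rs: "r i * s i = \<mu> i ^ 2 + \<mu> i * e i" and r_plus_s: "r i + s i = 2 * \<mu> i + e i" for i
    by (auto simp: \<mu>_def e_def min_def power2_eq_square algebra_simps)
  have "2 * a = (\<Sum>i\<in>I. 2 * \<mu> i + e i)"
    using sum_r sum_s by (simp add: r_plus_s[symmetric] sum.distrib)
  then have sum_e: "(\<Sum>i\<in>I. e i) = 2 * (a - M)"
    by (simp add: M_def sum.distrib sum_distrib_left[symmetric])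
  have "(\<Sum>i\<in>I. \<mu> i * e i) \<le> (\<Sum>i\<in>I. \<mu> i * (a - M))"
    using e_le \<mu>0 by (intro sum_mono) (simp add: mult_left_mono)
  also have "\<dots> = M * (a - M)"
    by (simp add: M_def sum_distrib_right)
  finally have "(\<Sum>i\<in>I. \<mu> i * e i) \<le> M * (a - M)" .
  moreover have "(\<Sum>i\<in>I. \<mu> i ^ 2) \<le> M ^ 2"
    unfolding M_def using sum_power2_le_power2_sum fin \<mu>0 by blast
  moreover have "M ^ 2 + 2 * (M * (a - M)) \<le> a ^ 2"
    using zero_le_power2[of "a - M"] by (simp add: power2_eq_square algebra_simps)
  ultimately have key: "(\<Sum>i\<in>I. \<mu> i ^ 2) + 2 * (\<Sum>i\<in>I. \<mu> i * e i) \<le> a ^ 2"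
    by linarith
  have "(r i + s i) * (a - min (r i) (s i)) = 2 * a * \<mu> i + a * e i - 2 * \<mu> i ^ 2 - \<mu> i * e i" for i
    unfolding r_plus_s \<mu>_def[symmetric] by (simp add: algebra_simps power2_eq_square)
  then have "(\<Sum>i\<in>I. (r i + s i) * (a - min (r i) (s i)))
      = 2 * a * M + a * (\<Sum>i\<in>I. e i) - 2 * (\<Sum>i\<in>I. \<mu> i ^ 2) - (\<Sum>i\<in>I. \<mu> i * e i)"
    by (simp add: M_def sum.distrib sum_subtractf sum_distrib_left)
  moreover have "(\<Sum>i\<in>I. r i * s i) = (\<Sum>i\<in>I. \<mu> i ^ 2) + (\<Sum>i\<in>I. \<mu> i * e i)"
    unfolding rs by (simp add: sum.distrib)
  ultimately show ?thesis
    using key sum_e by (simp add: power2_eq_square algebra_simps)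
qed

lemma weighted_sum_gt_imp_exists_gt:
  fixes w x :: "'i \<Rightarrow> real"
  assumes "finite I" and "\<And>i. i \<in> I \<Longrightarrow> w i \<ge> 0" and "c \<ge> 0"
    and "(\<Sum>i\<in>I. w i * x i) + c * y > ((\<Sum>i\<in>I. w i) + c) * z"
  shows "(\<exists>i\<in>I. x i > z) \<or> y > z"
proof (rule ccontr)
  assume "\<not> ?thesis"
  then have "(\<Sum>i\<in>I. w i * x i) \<le> (\<Sum>i\<in>I. w i * z)" and "c * y \<le> c * z"
    using assms(2,3) by (auto intro!: sum_mono mult_left_mono)
  then show False
    using assms(4) by (simp add: sum_distrib_right distrib_right)
qed

lemma sum_card_Int_partition:
  assumes P: "partition_on U P" and "finite U" and "S \<subseteq> U"
  shows "(\<Sum>C\<in>P. card (C \<inter> S)) = card S"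
proof -
  have "finite P" using finite_elements assms by blast
  then have "card (\<Union>C\<in>P. C \<inter> S) = (\<Sum>C\<in>P. card (C \<inter> S))"
    using assms partition_onD2[OF P]
    by (intro card_UN_disjoint) (auto simp: disjoint_def intro: finite_subset)
  moreover have "(\<Union>C\<in>P. C \<inter> S) = S"
    using partition_onD1[OF P] assms by auto
  ultimately show ?thesis by simp
qed

lemma partition_on_Diff_image:
  assumes "partition_on U P"
  shows "partition_on (U - K) ((\<lambda>C. C - K) ` P - {{}})"
  using partition_on_transform[OF assms, of "\<lambda>C. C - K"] by (auto simp: disjnt_def)

text \<open>One biclique of \<open>G(A)\<close>, abstracted: each of its vertices has exactly one edge leaving it.
  The stars \<open>X\<^sub>i\<close>, \<open>Y\<^sub>i\<close> exist only to make the network large enough for \<open>many_edges\<close>.\<close>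

locale biclique_network =
  fixes Red Blue :: "'v set" and E :: "('v \<times> 'v) set" and KR KB :: "'v set" and a :: nat
  assumes finite_Red: "finite Red" and finite_Blue: "finite Blue"
    and Red_Blue_disjoint: "Red \<inter> Blue = {}"
    and edges_bipartite: "E \<subseteq> Red \<times> Blue"
    and KR_subset: "KR \<subseteq> Red" and KB_subset: "KB \<subseteq> Blue"
    and card_KR: "card KR = a" and card_KB: "card KB = a" and a_pos: "a > 0"
    and biclique_edges: "KR \<times> KB \<subseteq> E"
    and degree_KR: "\<And>v. v \<in> KR \<Longrightarrow> card {e\<in>E. fst e = v} = a + 1"
    and degree_KB: "\<And>v. v \<in> KB \<Longrightarrow> card {e\<in>E. snd e = v} = a + 1"
    and many_edges: "real (card E) * (real a - 3) > (real a + 1)^2 * real a"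
begin

definition "K = KR \<union> KB"

definition "inner_edges C = card {e\<in>E. fst e \<in> C \<and> snd e \<in> C}"
definition "red_volume C = card {e\<in>E. fst e \<in> C}"
definition "blue_volume C = card {e\<in>E. snd e \<in> C}"

definition "contribution C =
  real (card E) * real (inner_edges C) - real (red_volume C) * real (blue_volume C)"

lemma finite_E: "finite E"
  using edges_bipartite finite_Red finite_Blue finite_subset by blast

lemma finite_KR: "finite KR" and finite_KB: "finite KB"
  using KR_subset KB_subset finite_Red finite_Blue finite_subset by blast+

lemma finite_division: "partition_on (Red \<union> Blue) P \<Longrightarrow> finite P"
  using finite_elements finite_Red finite_Blue by blast

lemma K_nonempty: "K \<noteq> {}"
  using card_KR a_pos by (auto simp: K_def)

lemma K_subset: "K \<subseteq> Red \<union> Blue"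
  using KR_subset KB_subset by (auto simp: K_def)

lemma card_E_pos: "card E > 0"
proof -
  have "card (KR \<times> KB) > 0"
    using card_KR card_KB a_pos by (simp add: card_cartesian_product)
  then show ?thesis
    using card_mono[OF finite_E biclique_edges] by linarith
qed

lemma bdeg_Red: "v \<in> Red \<Longrightarrow> bdeg E v = card {e\<in>E. fst e = v}"
  unfolding bdeg_def using edges_bipartite Red_Blue_disjoint
  by (intro arg_cong[where f = card]) auto

lemma bdeg_Blue: "v \<in> Blue \<Longrightarrow> bdeg E v = card {e\<in>E. snd e = v}"
  unfolding bdeg_def using edges_bipartite Red_Blue_disjoint
  by (intro arg_cong[where f = card]) auto

lemma sum_bdeg_Red: "(\<Sum>v\<in>C \<inter> Red. bdeg E v) = red_volume C"
proof -
  have "(\<Sum>v\<in>C \<inter> Red. bdeg E v) = (\<Sum>v\<in>C \<inter> Red. card {e\<in>E. fst e = v})"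
    by (simp add: bdeg_Red)
  also have "\<dots> = card (\<Union>v\<in>C \<inter> Red. {e\<in>E. fst e = v})"
    using finite_Red finite_E by (intro card_UN_disjoint[symmetric]) auto
  also have "(\<Union>v\<in>C \<inter> Red. {e\<in>E. fst e = v}) = {e\<in>E. fst e \<in> C}"
    using edges_bipartite by auto
  finally show ?thesis by (simp add: red_volume_def)
qed

lemma sum_bdeg_Blue: "(\<Sum>v\<in>C \<inter> Blue. bdeg E v) = blue_volume C"
proof -
  have "(\<Sum>v\<in>C \<inter> Blue. bdeg E v) = (\<Sum>v\<in>C \<inter> Blue. card {e\<in>E. snd e = v})"
    by (simp add: bdeg_Blue)
  also have "\<dots> = card (\<Union>v\<in>C \<inter> Blue. {e\<in>E. snd e = v})"
    using finite_Blue finite_E by (intro card_UN_disjoint[symmetric]) auto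
  also have "(\<Union>v\<in>C \<inter> Blue. {e\<in>E. snd e = v}) = {e\<in>E. snd e \<in> C}"
    using edges_bipartite by auto
  finally show ?thesis by (simp add: blue_volume_def)
qed

lemma Qb_eq_sum_contribution: "Qb Red Blue E P = (\<Sum>C\<in>P. contribution C) / (real (card E))^2"
  unfolding Qb_def contribution_def sum_bdeg_Red sum_bdeg_Blue sum_divide_distrib
  using card_E_pos
  by (intro sum.cong) (auto simp: inner_edges_def field_simps power2_eq_square)

lemma edge_fst_notin_KB: "(x, y) \<in> E \<Longrightarrow> x \<notin> KB"
  and edge_snd_notin_KR: "(x, y) \<in> E \<Longrightarrow> y \<notin> KR"
  using edges_bipartite KR_subset KB_subset Red_Blue_disjoint by blast+

lemma red_volume_split: "red_volume C = red_volume (C - K) + (a + 1) * card (C \<inter> KR)"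
proof -
  have "{e\<in>E. fst e \<in> C} = {e\<in>E. fst e \<in> C - K} \<union> {e\<in>E. fst e \<in> C \<inter> KR}"
    by (auto simp: K_def dest: edge_fst_notin_KB)
  moreover have "{e\<in>E. fst e \<in> C - K} \<inter> {e\<in>E. fst e \<in> C \<inter> KR} = {}"
    by (auto simp: K_def)
  ultimately have "red_volume C = red_volume (C - K) + card {e\<in>E. fst e \<in> C \<inter> KR}"
    unfolding red_volume_def by (simp add: card_Un_disjoint finite_E)
  also have "{e\<in>E. fst e \<in> C \<inter> KR} = (\<Union>v\<in>C \<inter> KR. {e\<in>E. fst e = v})" by auto
  also have "card \<dots> = (\<Sum>v\<in>C \<inter> KR. card {e\<in>E. fst e = v})"
    using finite_KR finite_E by (intro card_UN_disjoint) auto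
  also have "\<dots> = (\<Sum>v\<in>C \<inter> KR. a + 1)" by (simp add: degree_KR)
  finally show ?thesis by simp
qed

lemma blue_volume_split: "blue_volume C = blue_volume (C - K) + (a + 1) * card (C \<inter> KB)"
proof -
  have "{e\<in>E. snd e \<in> C} = {e\<in>E. snd e \<in> C - K} \<union> {e\<in>E. snd e \<in> C \<inter> KB}"
    by (auto simp: K_def dest: edge_snd_notin_KR)
  moreover have "{e\<in>E. snd e \<in> C - K} \<inter> {e\<in>E. snd e \<in> C \<inter> KB} = {}"
    by (auto simp: K_def)
  ultimately have "blue_volume C = blue_volume (C - K) + card {e\<in>E. snd e \<in> C \<inter> KB}"
    unfolding blue_volume_def by (simp add: card_Un_disjoint finite_E)
  also have "{e\<in>E. snd e \<in> C \<inter> KB} = (\<Union>v\<in>C \<inter> KB. {e\<in>E. snd e = v})" by auto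
  also have "card \<dots> = (\<Sum>v\<in>C \<inter> KB. card {e\<in>E. snd e = v})"
    using finite_KB finite_E by (intro card_UN_disjoint) auto
  also have "\<dots> = (\<Sum>v\<in>C \<inter> KB. a + 1)" by (simp add: degree_KB)
  finally show ?thesis by simp
qed

lemma card_external_edges_KR:
  assumes v: "v \<in> KR" shows "card {e\<in>E. fst e = v \<and> snd e \<notin> KB} = 1"
proof -
  have "{e\<in>E. fst e = v} = ({v} \<times> KB) \<union> {e\<in>E. fst e = v \<and> snd e \<notin> KB}"
    using biclique_edges v by auto
  moreover have "({v} \<times> KB) \<inter> {e\<in>E. fst e = v \<and> snd e \<notin> KB} = {}" by auto
  ultimately have "a + 1 = a + card {e\<in>E. fst e = v \<and> snd e \<notin> KB}"
    using degree_KR[OF v] card_KB finite_KB finite_E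
    by (simp add: card_Un_disjoint card_cartesian_product)
  then show ?thesis by simp
qed

lemma card_external_edges_KB:
  assumes v: "v \<in> KB" shows "card {e\<in>E. snd e = v \<and> fst e \<notin> KR} = 1"
proof -
  have "{e\<in>E. snd e = v} = (KR \<times> {v}) \<union> {e\<in>E. snd e = v \<and> fst e \<notin> KR}"
    using biclique_edges v by auto
  moreover have "(KR \<times> {v}) \<inter> {e\<in>E. snd e = v \<and> fst e \<notin> KR} = {}" by auto
  ultimately have "a + 1 = a + card {e\<in>E. snd e = v \<and> fst e \<notin> KR}"
    using degree_KB[OF v] card_KR finite_KR finite_E
    by (simp add: card_Un_disjoint card_cartesian_product)
  then show ?thesis by simp
qed

lemma inner_edges_le:
  "inner_edges C \<le> inner_edges (C - K) + card (C \<inter> KR) * card (C \<inter> KB)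
     + card (C \<inter> KR) + card (C \<inter> KB)"
proof -
  let ?outer = "{e\<in>E. fst e \<in> C - K \<and> snd e \<in> C - K}"
  let ?bic = "(C \<inter> KR) \<times> (C \<inter> KB)"
  let ?extR = "\<Union>v\<in>C \<inter> KR. {e\<in>E. fst e = v \<and> snd e \<notin> KB}"
  let ?extB = "\<Union>v\<in>C \<inter> KB. {e\<in>E. snd e = v \<and> fst e \<notin> KR}"
  have "{e\<in>E. fst e \<in> C \<and> snd e \<in> C} \<subseteq> ?outer \<union> ?bic \<union> ?extR \<union> ?extB"
    by (auto simp: K_def dest: edge_fst_notin_KB edge_snd_notin_KR)
  then have "inner_edges C \<le> card (?outer \<union> ?bic \<union> ?extR \<union> ?extB)"
    unfolding inner_edges_def using finite_E finite_KR finite_KB by (intro card_mono) auto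
  also have "\<dots> \<le> card ?outer + card ?bic + card ?extR + card ?extB"
    by (meson add_le_mono card_Un_le le_refl order_trans)
  also have "card ?extR \<le> card (C \<inter> KR)"
    using card_UN_le[of "C \<inter> KR" "\<lambda>v. {e\<in>E. fst e = v \<and> snd e \<notin> KB}"] finite_KR
    by (simp add: card_external_edges_KR)
  also have "card ?extB \<le> card (C \<inter> KB)"
    using card_UN_le[of "C \<inter> KB" "\<lambda>v. {e\<in>E. snd e = v \<and> fst e \<notin> KR}"] finite_KB
    by (simp add: card_external_edges_KB)
  finally show ?thesis by (simp add: inner_edges_def card_cartesian_product)
qed

lemma inner_edges_union_K_ge:
  "inner_edges C + a * a \<le> inner_edges (C \<union> K) + card (C \<inter> KR) * card (C \<inter> KB)"
proof -
  let ?inner = "{e\<in>E. fst e \<in> C \<and> snd e \<in> C}"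
  have "?inner \<union> (KR \<times> KB) \<subseteq> {e\<in>E. fst e \<in> C \<union> K \<and> snd e \<in> C \<union> K}"
    using biclique_edges by (auto simp: K_def)
  then have "card (?inner \<union> (KR \<times> KB)) \<le> inner_edges (C \<union> K)"
    unfolding inner_edges_def using finite_E by (intro card_mono) auto
  moreover have "card ?inner + card (KR \<times> KB) = card (?inner \<union> (KR \<times> KB)) + card (?inner \<inter> (KR \<times> KB))"
    using finite_E finite_KR finite_KB by (intro card_Un_Int) auto
  moreover have "?inner \<inter> (KR \<times> KB) = (C \<inter> KR) \<times> (C \<inter> KB)"
    using biclique_edges by auto
  ultimately show ?thesis
    using card_KR card_KB by (simp add: inner_edges_def card_cartesian_product)
qed

definition "merge_K P T = insert (T \<union> K) ((\<lambda>C. C - K) ` (P - {T}) - {{}})"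
definition "separate_K P = insert K ((\<lambda>C. C - K) ` P - {{}})"

lemma partition_separate_K:
  assumes "partition_on (Red \<union> Blue) P"
  shows "partition_on (Red \<union> Blue) (separate_K P)"
  unfolding separate_K_def
  using partition_on_Diff_image[OF assms, of K] K_subset K_nonempty
  by (subst partition_on_insert) (auto simp: disjnt_def)

lemma partition_merge_K:
  assumes P: "partition_on (Red \<union> Blue) P" and T: "T \<in> P"
  shows "partition_on (Red \<union> Blue) (merge_K P T)"
proof -
  have "disjnt T (\<Union>(P - {T}))"
    using partition_onD2[OF P] T by (auto simp: disjoint_def disjnt_def)
  moreover have "insert T (P - {T}) = P" using T by blast
  ultimately have "partition_on (Red \<union> Blue - T) (P - {T})"
    using P partition_on_insert[of T "P - {T}" "Red \<union> Blue"] by simp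
  then have "partition_on (Red \<union> Blue - (T \<union> K)) ((\<lambda>C. C - K) ` (P - {T}) - {{}})"
    using partition_on_Diff_image[of "Red \<union> Blue - T" "P - {T}" K] by (simp add: Diff_eq Int_assoc)
  moreover have "disjnt (T \<union> K) (\<Union>((\<lambda>C. C - K) ` (P - {T}) - {{}}))"
    using \<open>disjnt T (\<Union>(P - {T}))\<close> by (auto simp: disjnt_def)
  moreover have "T \<union> K \<subseteq> Red \<union> Blue"
    using partition_onD1[OF P] T K_subset by blast
  ultimately show ?thesis
    unfolding merge_K_def using K_nonempty by (simp add: partition_on_insert)
qed

lemma contribution_empty: "contribution {} = 0"
  by (simp add: contribution_def inner_edges_def red_volume_def blue_volume_def)

lemma sum_contribution_Diff_image:
  assumes "disjoint Q" and "finite Q"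
  shows "(\<Sum>C\<in>(\<lambda>C. C - K) ` Q - {{}}. contribution C) = (\<Sum>C\<in>Q. contribution (C - K))"
proof -
  have "(\<Sum>C\<in>(\<lambda>C. C - K) ` Q - {{}}. contribution C) = (\<Sum>C\<in>(\<lambda>C. C - K) ` Q. contribution C)"
    using assms contribution_empty by (intro sum.mono_neutral_left) auto
  also have "\<dots> = (\<Sum>C\<in>Q. contribution (C - K))"
  proof (rule sum.reindex_nontrivial[OF \<open>finite Q\<close>, simplified comp_def])
    fix C D assume "C \<in> Q" "D \<in> Q" "C \<noteq> D" "C - K = D - K"
    moreover from this have "C \<inter> D = {}" using \<open>disjoint Q\<close> by (auto simp: disjoint_def)
    ultimately have "C - K = {}" by blast
    then show "contribution (C - K) = 0" by (simp only: contribution_empty)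
  qed
  finally show ?thesis .
qed

definition "separation_loss P = (\<Sum>C\<in>P. contribution C - contribution (C - K))"

lemma sum_contribution_merge_K:
  assumes P: "partition_on (Red \<union> Blue) P" and T: "T \<in> P"
  shows "(\<Sum>C\<in>merge_K P T. contribution C) = (\<Sum>C\<in>P. contribution C)
           + (contribution (T \<union> K) - contribution (T - K)) - separation_loss P"
proof -
  have fin: "finite P" using finite_division[OF P] .
  have "T \<union> K \<notin> (\<lambda>C. C - K) ` (P - {T}) - {{}}" using K_nonempty by auto
  then have "(\<Sum>C\<in>merge_K P T. contribution C) = contribution (T \<union> K) + (\<Sum>C\<in>P - {T}. contribution (C - K))"
    unfolding merge_K_def using fin partition_onD2[OF P]
    by (simp add: sum_contribution_Diff_image disjoint_def)
  then show ?thesis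
    unfolding separation_loss_def by (simp add: sum_subtractf sum.remove[OF fin T])
qed

lemma sum_contribution_separate_K:
  assumes P: "partition_on (Red \<union> Blue) P"
  shows "(\<Sum>C\<in>separate_K P. contribution C) = (\<Sum>C\<in>P. contribution C)
           + contribution K - separation_loss P"
proof -
  have fin: "finite P" using finite_division[OF P] .
  have "K \<notin> (\<lambda>C. C - K) ` P - {{}}" using K_nonempty by auto
  then show ?thesis
    unfolding separate_K_def separation_loss_def using fin partition_onD2[OF P]
    by (simp add: sum_contribution_Diff_image sum_subtractf)
qed

lemma sum_card_Int_KR:
  assumes "partition_on (Red \<union> Blue) P" shows "(\<Sum>C\<in>P. card (C \<inter> KR)) = a"
  using sum_card_Int_partition[OF assms] finite_Red finite_Blue KR_subset card_KR by auto

lemma sum_card_Int_KB: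
  assumes "partition_on (Red \<union> Blue) P" shows "(\<Sum>C\<in>P. card (C \<inter> KB)) = a"
  using sum_card_Int_partition[OF assms] finite_Red finite_Blue KB_subset card_KB by auto

lemma sum_min_card_Int_le:
  assumes "partition_on (Red \<union> Blue) P"
  shows "(\<Sum>C\<in>P. min (real (card (C \<inter> KR))) (real (card (C \<inter> KB)))) \<le> real a"
proof -
  have "(\<Sum>C\<in>P. min (real (card (C \<inter> KR))) (real (card (C \<inter> KB)))) \<le> (\<Sum>C\<in>P. real (card (C \<inter> KR)))"
    by (intro sum_mono) simp
  also have "\<dots> = real a" using sum_card_Int_KR[OF assms] by (simp flip: of_nat_sum)
  finally show ?thesis .
qed

lemma sum_card_Int_KR_KB_less:
  assumes P: "partition_on (Red \<union> Blue) P" and split: "\<not> (\<exists>C\<in>P. K \<subseteq> C)"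
  shows "(\<Sum>C\<in>P. card (C \<inter> KR) * card (C \<inter> KB)) < a * a"
proof -
  have fin: "finite P" using finite_division[OF P] .
  have same_block: "C = D" if "C \<in> P" "D \<in> P" "v \<in> C" "v \<in> D" for C D v
    using partition_onD2[OF P] that by (auto simp: disjoint_def)
  let ?joined = "\<Union>C\<in>P. (C \<inter> KR) \<times> (C \<inter> KB)"
  have "(\<Sum>C\<in>P. card (C \<inter> KR) * card (C \<inter> KB)) = card ?joined"
    using fin finite_KR finite_KB same_block
    by (subst card_UN_disjoint) (auto simp: card_cartesian_product)
  moreover have "?joined \<subset> KR \<times> KB"
  proof -
    obtain u where u: "u \<in> KR" using card_KR a_pos by fastforce
    then obtain C where C: "C \<in> P" "u \<in> C" using partition_onD1[OF P] KR_subset by blast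
    obtain u' v where "u' \<in> KR" "v \<in> KB" "\<not> (\<exists>D\<in>P. u' \<in> D \<and> v \<in> D)"
    proof (cases "KB \<subseteq> C")
      case True
      then obtain w where "w \<in> KR" "w \<notin> C" using split C by (auto simp: K_def)
      moreover obtain v where "v \<in> KB" using card_KB a_pos by fastforce
      ultimately show ?thesis using that C True same_block by blast
    next
      case False
      then obtain v where "v \<in> KB" "v \<notin> C" by blast
      then show ?thesis using that u C same_block by blast
    qed
    then show ?thesis by blast
  qed
  then have "card ?joined < card (KR \<times> KB)"
    using finite_KR finite_KB by (intro psubset_card_mono) auto
  ultimately show ?thesis using card_KR card_KB by (simp add: card_cartesian_product)
qed

lemma contribution_K_ge: "contribution K \<ge> (real (card E) - (real a + 1)^2) * (real a)^2"
proof -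
  have "a * a \<le> inner_edges K"
    using inner_edges_union_K_ge[of "{}"] by (simp add: inner_edges_def)
  then have "real (card E) * (real a)^2 \<le> real (card E) * real (inner_edges K)"
    by (intro mult_left_mono) (simp_all add: power2_eq_square flip: of_nat_mult)
  moreover have "red_volume K = (a + 1) * a" "blue_volume K = (a + 1) * a"
    using red_volume_split[of K] blue_volume_split[of K] card_KR card_KB
    by (simp_all add: K_def red_volume_def blue_volume_def)
  ultimately show ?thesis
    unfolding contribution_def by (simp add: power2_eq_square algebra_simps)
qed

lemma contribution_union_K_ge:
  fixes C :: "'v set"
  defines "m \<equiv> real (card E)" and "A \<equiv> real a" and "d \<equiv> real a + 1"
    and "R \<equiv> real (red_volume (C - K))" and "B \<equiv> real (blue_volume (C - K))"
  shows "contribution (C \<union> K) - contribution (C - K)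
    \<ge> m * (real (inner_edges C) - real (inner_edges (C - K))
             - real (card (C \<inter> KR)) * real (card (C \<inter> KB)) + A * A)
       - (d * A * (R + B) + d^2 * A * A)"
proof -
  have "(C \<union> K) - K = C - K" "(C \<union> K) \<inter> KR = KR" "(C \<union> K) \<inter> KB = KB" by (auto simp: K_def)
  then have "real (red_volume (C \<union> K)) = R + d * A" "real (blue_volume (C \<union> K)) = B + d * A"
    using red_volume_split[of "C \<union> K"] blue_volume_split[of "C \<union> K"] card_KR card_KB
    by (simp_all add: R_def B_def d_def A_def algebra_simps)
  moreover have "real (inner_edges C) - real (card (C \<inter> KR)) * real (card (C \<inter> KB)) + A * A
      \<le> real (inner_edges (C \<union> K))"
    using inner_edges_union_K_ge[of C] unfolding A_def by (simp flip: of_nat_mult of_nat_add)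
  then have "m * (real (inner_edges C) - real (card (C \<inter> KR)) * real (card (C \<inter> KB)) + A * A)
      \<le> m * real (inner_edges (C \<union> K))"
    by (intro mult_left_mono) (simp_all add: m_def)
  ultimately show ?thesis
    unfolding contribution_def by (simp add: m_def R_def B_def power2_eq_square algebra_simps)
qed

lemma weighted_move_bound:
  fixes C :: "'v set"
  defines "m \<equiv> real (card E)" and "A \<equiv> real a" and "d \<equiv> real a + 1"
    and "\<rho> \<equiv> real (card (C \<inter> KR))" and "\<beta> \<equiv> real (card (C \<inter> KB))"
  shows "min \<rho> \<beta> * (contribution (C \<union> K) - contribution (C - K)) - A * (contribution C - contribution (C - K))
    \<ge> (m - d^2) * A * (min \<rho> \<beta> * A - \<rho> * \<beta>) - m * (\<rho> + \<beta>) * (A - min \<rho> \<beta>)"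
proof -
  define lam where "lam = min \<rho> \<beta>"
  define R where "R = real (red_volume (C - K))"
  define B where "B = real (blue_volume (C - K))"
  \<comment> \<open>the edges of \<open>C\<close> between \<open>C - K\<close> and \<open>C \<inter> K\<close>\<close>
  define link where "link = real (inner_edges C) - real (inner_edges (C - K)) - \<rho> * \<beta>"
  have lam_bounds: "0 \<le> lam" "lam \<le> \<rho>" "lam \<le> \<beta>" "lam \<le> A"
    using card_mono[OF finite_KR, of "C \<inter> KR"] card_KR
    by (auto simp: lam_def \<rho>_def \<beta>_def A_def)
  have link_le: "link \<le> \<rho> + \<beta>"
    using inner_edges_le[of C] unfolding link_def \<rho>_def \<beta>_def by (simp flip: of_nat_mult of_nat_add)
  have loss: "contribution C - contribution (C - K) = m * (\<rho> * \<beta> + link) - (d * \<rho> * B + d * \<beta> * R + d^2 * \<rho> * \<beta>)"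
    using red_volume_split[of C] blue_volume_split[of C]
    unfolding contribution_def link_def m_def R_def B_def d_def \<rho>_def \<beta>_def
    by (simp add: power2_eq_square algebra_simps)
  have gain: "contribution (C \<union> K) - contribution (C - K) \<ge> m * (link + A * A) - (d * A * (R + B) + d^2 * A * A)"
    using contribution_union_K_ge[of C]
    by (simp add: link_def m_def A_def d_def R_def B_def \<rho>_def \<beta>_def algebra_simps)
  have "lam * (contribution (C \<union> K) - contribution (C - K)) - A * (contribution C - contribution (C - K))
      \<ge> (m - d^2) * A * (lam * A - \<rho> * \<beta>) + d * A * ((\<rho> - lam) * B + (\<beta> - lam) * R) - m * link * (A - lam)"
  proof -
    have "lam * (m * (link + A * A) - (d * A * (R + B) + d^2 * A * A))
        - A * (m * (\<rho> * \<beta> + link) - (d * \<rho> * B + d * \<beta> * R + d^2 * \<rho> * \<beta>))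
      = (m - d^2) * A * (lam * A - \<rho> * \<beta>) + d * A * ((\<rho> - lam) * B + (\<beta> - lam) * R) - m * link * (A - lam)"
      by (simp add: power2_eq_square algebra_simps)
    then show ?thesis
      using mult_left_mono[OF gain lam_bounds(1)] loss by (simp only:)
  qed
  moreover have "d * A * ((\<rho> - lam) * B + (\<beta> - lam) * R) \<ge> 0"
    using lam_bounds by (simp add: d_def A_def R_def B_def)
  moreover have "m * link * (A - lam) \<le> m * (\<rho> + \<beta>) * (A - lam)"
    using link_le lam_bounds by (intro mult_right_mono mult_left_mono) (simp_all add: m_def)
  ultimately show ?thesis unfolding lam_def by linarith
qed

lemma sum_weighted_move_bound:
  fixes P :: "'v set set"
  defines "m \<equiv> real (card E)" and "A \<equiv> real a" and "d \<equiv> real a + 1"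
    and "\<rho> \<equiv> \<lambda>C. real (card (C \<inter> KR))" and "\<beta> \<equiv> \<lambda>C. real (card (C \<inter> KB))"
    and "lam \<equiv> \<lambda>C. min (real (card (C \<inter> KR))) (real (card (C \<inter> KB)))"
  shows "(m - d^2) * A * (A * (\<Sum>C\<in>P. lam C) - (\<Sum>C\<in>P. \<rho> C * \<beta> C))
           - m * (\<Sum>C\<in>P. (\<rho> C + \<beta> C) * (A - lam C))
         \<le> (\<Sum>C\<in>P. lam C * (contribution (C \<union> K) - contribution (C - K))) - A * separation_loss P"
proof -
  have "(m - d^2) * A * (A * (\<Sum>C\<in>P. lam C) - (\<Sum>C\<in>P. \<rho> C * \<beta> C))
        - m * (\<Sum>C\<in>P. (\<rho> C + \<beta> C) * (A - lam C))
      = (\<Sum>C\<in>P. (m - d^2) * A * (lam C * A - \<rho> C * \<beta> C) - m * (\<rho> C + \<beta> C) * (A - lam C))"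
  proof -
    have "(m - d^2) * A * (lam C * A - \<rho> C * \<beta> C) - m * (\<rho> C + \<beta> C) * (A - lam C)
        = ((m - d^2) * A * A) * lam C - ((m - d^2) * A) * (\<rho> C * \<beta> C)
          - m * ((\<rho> C + \<beta> C) * (A - lam C))" for C
      by (simp add: algebra_simps)
    then have "(\<Sum>C\<in>P. (m - d^2) * A * (lam C * A - \<rho> C * \<beta> C) - m * (\<rho> C + \<beta> C) * (A - lam C))
        = ((m - d^2) * A * A) * (\<Sum>C\<in>P. lam C) - ((m - d^2) * A) * (\<Sum>C\<in>P. \<rho> C * \<beta> C)
          - m * (\<Sum>C\<in>P. (\<rho> C + \<beta> C) * (A - lam C))"
      by (simp add: sum_subtractf sum_distrib_left mult.assoc)
    then show ?thesis by (simp add: algebra_simps)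
  qed
  also have "\<dots> \<le> (\<Sum>C\<in>P. lam C * (contribution (C \<union> K) - contribution (C - K))
                              - A * (contribution C - contribution (C - K)))"
    unfolding lam_def m_def A_def d_def \<rho>_def \<beta>_def by (intro sum_mono weighted_move_bound)
  also have "\<dots> = (\<Sum>C\<in>P. lam C * (contribution (C \<union> K) - contribution (C - K))) - A * separation_loss P"
    unfolding separation_loss_def sum_distrib_left sum_subtractf[symmetric] by (simp add: algebra_simps)
  finally show ?thesis .
qed

lemma weighted_moves_exceed_loss:
  assumes P: "partition_on (Red \<union> Blue) P" and split: "\<not> (\<exists>C\<in>P. K \<subseteq> C)"
  defines "\<rho> \<equiv> \<lambda>C. real (card (C \<inter> KR))" and "\<beta> \<equiv> \<lambda>C. real (card (C \<inter> KB))"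
  shows "(\<Sum>C\<in>P. min (\<rho> C) (\<beta> C) * (contribution (C \<union> K) - contribution (C - K)))
           + (real a - (\<Sum>C\<in>P. min (\<rho> C) (\<beta> C))) * contribution K
         > real a * separation_loss P"
proof -
  define m where "m = real (card E)"
  define A where "A = real a"
  define d where "d = real a + 1"
  define lam where "lam C = min (\<rho> C) (\<beta> C)" for C
  define X where "X = A^2 - (\<Sum>C\<in>P. \<rho> C * \<beta> C)"
  have fin: "finite P" using finite_division[OF P] .
  have sum_\<rho>: "(\<Sum>C\<in>P. \<rho> C) = A" and sum_\<beta>: "(\<Sum>C\<in>P. \<beta> C) = A"
    using sum_card_Int_KR[OF P] sum_card_Int_KB[OF P]
    by (simp_all add: \<rho>_def \<beta>_def A_def flip: of_nat_sum)
  have sum_lam: "(\<Sum>C\<in>P. lam C) \<le> A"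
    using sum_min_card_Int_le[OF P] by (simp add: lam_def \<rho>_def \<beta>_def A_def)
  have X_pos: "X > 0"
    using sum_card_Int_KR_KB_less[OF P split]
    unfolding X_def \<rho>_def \<beta>_def A_def power2_eq_square
    by (simp flip: of_nat_mult of_nat_sum of_nat_less_iff)
  have deficit: "(\<Sum>C\<in>P. (\<rho> C + \<beta> C) * (A - lam C)) \<le> 3 * X"
    unfolding X_def lam_def
    by (rule sum_min_deficit_le[OF fin _ _ sum_\<rho> sum_\<beta>]) (simp_all add: \<rho>_def \<beta>_def)
  have moves: "(m - d^2) * A * (A * (\<Sum>C\<in>P. lam C) - (\<Sum>C\<in>P. \<rho> C * \<beta> C))
        - m * (\<Sum>C\<in>P. (\<rho> C + \<beta> C) * (A - lam C))
      \<le> (\<Sum>C\<in>P. lam C * (contribution (C \<union> K) - contribution (C - K))) - A * separation_loss P"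
    unfolding m_def A_def d_def lam_def \<rho>_def \<beta>_def by (rule sum_weighted_move_bound)
  have "(A - (\<Sum>C\<in>P. lam C)) * ((m - d^2) * A^2) \<le> (A - (\<Sum>C\<in>P. lam C)) * contribution K"
    using contribution_K_ge sum_lam by (intro mult_left_mono) (simp_all add: m_def d_def A_def)
  moreover have "m * (\<Sum>C\<in>P. (\<rho> C + \<beta> C) * (A - lam C)) \<le> m * (3 * X)"
    using deficit by (intro mult_left_mono) (simp_all add: m_def)
  moreover have "X * (m * (A - 3) - d^2 * A) > 0"
    using X_pos many_edges by (simp add: m_def d_def A_def)
  moreover have "(m - d^2) * A * (A * (\<Sum>C\<in>P. lam C) - (\<Sum>C\<in>P. \<rho> C * \<beta> C))
      + (A - (\<Sum>C\<in>P. lam C)) * ((m - d^2) * A^2) - m * (3 * X) = X * (m * (A - 3) - d^2 * A)"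
    by (simp add: X_def power2_eq_square algebra_simps)
  ultimately have "(\<Sum>C\<in>P. lam C * (contribution (C \<union> K) - contribution (C - K)))
      + (A - (\<Sum>C\<in>P. lam C)) * contribution K > A * separation_loss P"
    using moves by linarith
  then show ?thesis by (simp add: lam_def A_def)
qed

lemma exists_better_division:
  assumes P: "partition_on (Red \<union> Blue) P" and split: "\<not> (\<exists>C\<in>P. K \<subseteq> C)"
  shows "\<exists>P'. partition_on (Red \<union> Blue) P' \<and> Qb Red Blue E P' > Qb Red Blue E P"
proof -
  have fin: "finite P" using finite_division[OF P] .
  have m2: "(real (card E))^2 > 0" using card_E_pos by simp
  have "(\<exists>T\<in>P. contribution (T \<union> K) - contribution (T - K) > separation_loss P)
      \<or> contribution K > separation_loss P"
    using weighted_moves_exceed_loss[OF P split] sum_min_card_Int_le[OF P]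
    by (intro weighted_sum_gt_imp_exists_gt[OF fin, where w = "\<lambda>C. min (real (card (C \<inter> KR))) (real (card (C \<inter> KB)))"
          and c = "real a - (\<Sum>C\<in>P. min (real (card (C \<inter> KR))) (real (card (C \<inter> KB))))"]) auto
  then show ?thesis
  proof
    assume "\<exists>T\<in>P. contribution (T \<union> K) - contribution (T - K) > separation_loss P"
    then obtain T where "T \<in> P" "contribution (T \<union> K) - contribution (T - K) > separation_loss P"
      by blast
    then have "Qb Red Blue E (merge_K P T) > Qb Red Blue E P"
      using sum_contribution_merge_K[OF P] m2
      by (simp add: Qb_eq_sum_contribution divide_strict_right_mono)
    then show ?thesis using partition_merge_K[OF P \<open>T \<in> P\<close>] by blast
  next
    assume "contribution K > separation_loss P"
    then have "Qb Red Blue E (separate_K P) > Qb Red Blue E P"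
      using sum_contribution_separate_K[OF P] m2
      by (simp add: Qb_eq_sum_contribution divide_strict_right_mono)
    then show ?thesis using partition_separate_K[OF P] by blast
  qed
qed

theorem max_division_contains_K:
  assumes "max_division Red Blue E P"
  shows "\<exists>C\<in>P. K \<subseteq> C"
proof (rule ccontr)
  assume "\<not> ?thesis"
  then obtain P' where "partition_on (Red \<union> Blue) P'" "Qb Red Blue E P' > Qb Red Blue E P"
    using exists_better_division assms unfolding max_division_def by blast
  then show False
    using assms unfolding max_division_def by (meson not_le)
qed

end

lemma seven_dvd_of_seven_dvd_power2:
  fixes n :: nat assumes "7 dvd n^2" shows "7 dvd n"
proof -
  have "n^2 mod 7 = (n mod 7)^2 mod 7" by (simp add: power_mod)
  moreover have "n mod 7 \<in> {0, 1, 2, 3, 4, 5, 6}" by auto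
  ultimately show ?thesis using assms by (auto simp: dvd_eq_mod_eq_0)
qed

lemma cubic_edge_bound:
  fixes x m :: real
  assumes "x \<ge> 7" and "7 * m \<ge> 13 * x^2 + 14 * x + 63"
  shows "m * (x - 3) > (x + 1)^2 * x"
proof -
  have "7 * m * (x - 3) \<ge> (13 * x^2 + 14 * x + 63) * (x - 3)"
    using assms by (intro mult_right_mono) auto
  moreover have "x^2 * (2 * x - 13) \<ge> x^2" and "x^2 \<ge> 7 * x"
    using assms by (simp_all add: mult_left_mono[of 1 "2 * x - 13" "x^2", simplified] power2_eq_square)
  moreover have "(13 * x^2 + 14 * x + 63) * (x - 3) - 7 * ((x + 1)^2 * x)
      = 3 * (x^2 * (2 * x - 13)) + 14 * x - 189"
    by (simp add: power2_eq_square algebra_simps)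
  ultimately show ?thesis using assms by linarith
qed

lemma finite_GA_red: "finite (GA_red k as)"
proof -
  have "GA_red k as \<subseteq> (\<lambda>(t, j). KR t j) ` ({..<k} \<times> {..<asum k as}) \<union> X ` {..<3*k}
     \<union> (\<lambda>(i, l). XL i l) ` ({..<3*k} \<times> {..<(asum k as)^2 div 7}) \<union> YC ` {..<3*k}"
    unfolding GA_red_def by auto
  then show ?thesis by (rule finite_subset) auto
qed

lemma finite_GA_blue: "finite (GA_blue k as)"
proof -
  have "GA_blue k as \<subseteq> (\<lambda>(t, j). KB t j) ` ({..<k} \<times> {..<asum k as}) \<union> Y ` {..<3*k}
     \<union> (\<lambda>(i, l). YL i l) ` ({..<3*k} \<times> {..<(asum k as)^2 div 7}) \<union> XC ` {..<3*k}"
    unfolding GA_blue_def by auto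
  then show ?thesis by (rule finite_subset) auto
qed

lemma GA_red_blue_disjoint: "GA_red k as \<inter> GA_blue k as = {}"
  unfolding GA_red_def GA_blue_def by auto

lemma GA_edges_subset: "GA_edges k as fr fb \<subseteq> GA_red k as \<times> GA_blue k as"
  unfolding GA_edges_def GA_red_def GA_blue_def by auto

lemma card_GA_edges_at_KR:
  assumes "valid_assign k as fr" and "t < k" and "j < asum k as"
  shows "card {e\<in>GA_edges k as fr fb. fst e = KR t j} = asum k as + 1"
proof -
  have "fr t j < 3*k" using assms by (simp add: valid_assign_def)
  then have "{e\<in>GA_edges k as fr fb. fst e = KR t j}
      = insert (KR t j, Y (fr t j)) ((\<lambda>j'. (KR t j, KB t j')) ` {..<asum k as})"
    unfolding GA_edges_def using assms by auto
  moreover have "card ((\<lambda>j'. (KR t j, KB t j')) ` {..<asum k as}) = asum k as"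
    by (subst card_image) (auto simp: inj_on_def)
  ultimately show ?thesis by (simp add: card_insert_if) auto
qed

lemma card_GA_edges_at_KB:
  assumes "valid_assign k as fb" and "t < k" and "j < asum k as"
  shows "card {e\<in>GA_edges k as fr fb. snd e = KB t j} = asum k as + 1"
proof -
  have "fb t j < 3*k" using assms by (simp add: valid_assign_def)
  then have "{e\<in>GA_edges k as fr fb. snd e = KB t j}
      = insert (X (fb t j), KB t j) ((\<lambda>j'. (KR t j', KB t j)) ` {..<asum k as})"
    unfolding GA_edges_def using assms by auto
  moreover have "card ((\<lambda>j'. (KR t j', KB t j)) ` {..<asum k as}) = asum k as"
    by (subst card_image) (auto simp: inj_on_def)
  ultimately show ?thesis by (simp add: card_insert_if) auto
qed

lemma card_GA_edges_ge:
  assumes "valid_assign k as fr" and "valid_assign k as fb"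
  defines "n \<equiv> asum k as" and "L \<equiv> (asum k as)^2 div 7"
  shows "k * (n * n + 2 * n + 9 + 6 * L) \<le> card (GA_edges k as fr fb)"
proof -
  let ?P1 = "(\<lambda>(t, j, j'). (KR t j, KB t j')) ` ({..<k} \<times> {..<n} \<times> {..<n})"
  let ?P2 = "(\<lambda>(t, j). (X (fb t j), KB t j)) ` ({..<k} \<times> {..<n})"
  let ?P3 = "(\<lambda>(t, j). (KR t j, Y (fr t j))) ` ({..<k} \<times> {..<n})"
  let ?P4 = "(\<lambda>i. (X i, Y i)) ` {..<3*k}"
  let ?P5 = "(\<lambda>(i, l). (XL i l, XC i)) ` ({..<3*k} \<times> {..<L})"
  let ?P6 = "(\<lambda>(i, l). (YC i, YL i l)) ` ({..<3*k} \<times> {..<L})"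
  let ?P7 = "(\<lambda>i. (X i, XC i)) ` {..<3*k}"
  let ?P8 = "(\<lambda>i. (YC i, Y i)) ` {..<3*k}"
  have "fb t j < 3*k" "fr t j < 3*k" if "t < k" "j < n" for t j
    using assms that by (auto simp: valid_assign_def)
  then have sub: "?P1 \<union> ?P2 \<union> ?P3 \<union> ?P4 \<union> ?P5 \<union> ?P6 \<union> ?P7 \<union> ?P8 \<subseteq> GA_edges k as fr fb"
    unfolding GA_edges_def n_def L_def by fastforce
  have "card (?P1 \<union> ?P2 \<union> ?P3 \<union> ?P4 \<union> ?P5 \<union> ?P6 \<union> ?P7 \<union> ?P8)
      = card ?P1 + card ?P2 + card ?P3 + card ?P4 + card ?P5 + card ?P6 + card ?P7 + card ?P8"
    by (subst card_Un_disjoint, simp, simp, fastforce)+ simp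
  also have "\<dots> = k * (n * n + 2 * n + 9 + 6 * L)"
    by (simp add: card_image inj_on_def card_cartesian_product algebra_simps)
  finally show ?thesis
    using card_mono[OF finite_subset[OF GA_edges_subset] sub] finite_GA_red finite_GA_blue by simp
qed

lemma GA_biclique_network:
  assumes inst: "three_partition_instance k b as" and seven: "7 dvd (asum k as)^2"
    and fr: "valid_assign k as fr" and fb: "valid_assign k as fb" and t: "t < k"
  shows "biclique_network (GA_red k as) (GA_blue k as) (GA_edges k as fr fb)
           (KR t ` {..<asum k as}) (KB t ` {..<asum k as}) (asum k as)"
proof
  define n where "n = asum k as"
  have "as 0 \<le> n" using t by (auto simp: n_def asum_def intro: member_le_sum)
  moreover have "as 0 > 0" using inst t by (simp add: three_partition_instance_def)
  ultimately show n_pos: "asum k as > 0" by (simp add: n_def)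
  \<comment> \<open>\<open>7 dvd n\<^sup>2\<close> gives \<open>n \<ge> 7\<close>, which the edge bound needs\<close>
  have "7 dvd n" using seven_dvd_of_seven_dvd_power2 seven by (simp add: n_def)
  then have "n \<ge> 7" using n_pos by (auto simp: n_def elim!: dvdE)
  moreover have "n * n + 2 * n + 9 + 6 * (n^2 div 7) \<le> card (GA_edges k as fr fb)"
    using card_GA_edges_ge[OF fr fb] t by (cases k) (auto simp: n_def)
  moreover have "7 * (n^2 div 7) = n^2" using seven by (simp add: n_def)
  ultimately have "13 * n^2 + 14 * n + 63 \<le> 7 * card (GA_edges k as fr fb)"
    by (simp add: power2_eq_square)
  then have edges: "real (13 * n^2 + 14 * n + 63) \<le> real (7 * card (GA_edges k as fr fb))"
    by (simp only: of_nat_le_iff)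
  show "(real (asum k as) + 1)^2 * real (asum k as) < real (card (GA_edges k as fr fb)) * (real (asum k as) - 3)"
    using \<open>n \<ge> 7\<close> edges by (intro cubic_edge_bound) (simp_all add: n_def)
next
  show "KR t ` {..<asum k as} \<subseteq> GA_red k as" "KB t ` {..<asum k as} \<subseteq> GA_blue k as"
    "KR t ` {..<asum k as} \<times> KB t ` {..<asum k as} \<subseteq> GA_edges k as fr fb"
    using t by (auto simp: GA_red_def GA_blue_def GA_edges_def)
  show "card (KR t ` {..<asum k as}) = asum k as" "card (KB t ` {..<asum k as}) = asum k as"
    by (simp_all add: card_image inj_on_def)
  show "card {e\<in>GA_edges k as fr fb. fst e = v} = asum k as + 1" if "v \<in> KR t ` {..<asum k as}" for v
    using that card_GA_edges_at_KR[OF fr t] by blast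
  show "card {e\<in>GA_edges k as fr fb. snd e = v} = asum k as + 1" if "v \<in> KB t ` {..<asum k as}" for v
    using that card_GA_edges_at_KB[OF fb t] by blast
qed (simp_all add: finite_GA_red finite_GA_blue GA_red_blue_disjoint GA_edges_subset)

theorem lemma1:
  fixes k b :: nat and as :: "nat \<Rightarrow> nat" and fr fb :: "nat \<Rightarrow> nat \<Rightarrow> nat"
    and P :: "vtx set set"
  assumes "three_partition_instance k b as"
    and "7 dvd (asum k as)^2"
    and "valid_assign k as fr" and "valid_assign k as fb"
    and "max_division (GA_red k as) (GA_blue k as) (GA_edges k as fr fb) P"
  shows "\<forall>t<k. \<exists>C\<in>P. biclique k as t \<subseteq> C"
proof (intro allI impI)
  fix t assume "t < k"
  then interpret biclique_network "GA_red k as" "GA_blue k as" "GA_edges k as fr fb"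
      "KR t ` {..<asum k as}" "KB t ` {..<asum k as}" "asum k as"
    using GA_biclique_network assms(1-4) by blast
  have "K = biclique k as t" by (auto simp: K_def biclique_def)
  then show "\<exists>C\<in>P. biclique k as t \<subseteq> C"
    using max_division_contains_K[OF assms(5)] by simp
qed

end
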